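(* The variety $\mathsf{V}(S_{(4,400)})$ is the ai-semiring variety defined by the identities $xyz\approx xyz+y$, $xy\approx xy+y$, $yz\approx yz+y$, $xyz\approx xy+yz+xz$, and $x_1x_2+x_3x_4\approx x_1x_2+x_3x_4+x_1x_4$.
   Context: An ai-semiring is an algebra $(S,+,\cdot)$ with $(S,+)$ a semilattice, $(S,\cdot)$ a semigroup, and both distributive laws. $\mathsf{V}(S)$ is the variety generated by $S$; "the ai-semiring variety defined by identities $\Sigma$" is the class of all ai-semirings satisfying $\Sigma$. $S_{(4,400)}$ has carrier $\{1,2,3,4\}$; addition: $x+x=x$, $2+x=x$, $1+x=1$ for all $x$, $3+4=1$; multiplication (row $a$, column $b$ gives $a\cdot b$): row $1$: $1,1,1,1$; row $2$: $1,2,3,1$; row $3$: $1,1,1,1$; row $4$: $1,4,1,1$. *)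

theory Defs
  imports Main
begin

datatype s4 = E1 | E2 | E3 | E4

fun s4_add :: "s4 \<Rightarrow> s4 \<Rightarrow> s4" where
  "s4_add a b = (if a = b then a else if a = E2 then b else if b = E2 then a else E1)"

fun s4_mul :: "s4 \<Rightarrow> s4 \<Rightarrow> s4" where
  "s4_mul E2 E2 = E2"
| "s4_mul E2 E3 = E3"
| "s4_mul E4 E2 = E4"
| "s4_mul _ _ = E1"

datatype trm = Var nat | Add trm trm | Mul trm trm

fun eval :: "('a \<Rightarrow> 'a \<Rightarrow> 'a) \<Rightarrow> ('a \<Rightarrow> 'a \<Rightarrow> 'a) \<Rightarrow> (nat \<Rightarrow> 'a) \<Rightarrow> trm \<Rightarrow> 'a" where
  "eval p m \<rho> (Var i) = \<rho> i"
| "eval p m \<rho> (Add s t) = p (eval p m \<rho> s) (eval p m \<rho> t)"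
| "eval p m \<rho> (Mul s t) = m (eval p m \<rho> s) (eval p m \<rho> t)"

definition satisfies :: "('a \<Rightarrow> 'a \<Rightarrow> 'a) \<Rightarrow> ('a \<Rightarrow> 'a \<Rightarrow> 'a) \<Rightarrow> trm \<Rightarrow> trm \<Rightarrow> bool" where
  "satisfies p m s t \<longleftrightarrow> (\<forall>\<rho>. eval p m \<rho> s = eval p m \<rho> t)"

text \<open>Membership in the variety V(S_(4,400)) generated by S_(4,400): by Birkhoff's HSP theorem,
  V(S) is the class of all algebras of the same type satisfying every identity that holds in S.\<close>
definition in_V_S4 :: "('a \<Rightarrow> 'a \<Rightarrow> 'a) \<Rightarrow> ('a \<Rightarrow> 'a \<Rightarrow> 'a) \<Rightarrow> bool" where
  "in_V_S4 p m \<longleftrightarrow> (\<forall>s t. satisfies s4_add s4_mul s t \<longrightarrow> satisfies p m s t)"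

definition ai_semiring :: "('a \<Rightarrow> 'a \<Rightarrow> 'a) \<Rightarrow> ('a \<Rightarrow> 'a \<Rightarrow> 'a) \<Rightarrow> bool" where
  "ai_semiring p m \<longleftrightarrow>
     (\<forall>x y z. p (p x y) z = p x (p y z)) \<and>
     (\<forall>x y. p x y = p y x) \<and>
     (\<forall>x. p x x = x) \<and>
     (\<forall>x y z. m (m x y) z = m x (m y z)) \<and>
     (\<forall>x y z. m x (p y z) = p (m x y) (m x z)) \<and>
     (\<forall>x y z. m (p x y) z = p (m x z) (m y z))"

definition sigma_S4 :: "('a \<Rightarrow> 'a \<Rightarrow> 'a) \<Rightarrow> ('a \<Rightarrow> 'a \<Rightarrow> 'a) \<Rightarrow> bool" where
  "sigma_S4 p m \<longleftrightarrow>
     (\<forall>x y z. m (m x y) z = p (m (m x y) z) y) \<and>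
     (\<forall>x y. m x y = p (m x y) y) \<and>
     (\<forall>y z. m y z = p (m y z) y) \<and>
     (\<forall>x y z. m (m x y) z = p (p (m x y) (m y z)) (m x z)) \<and>
     (\<forall>x1 x2 x3 x4. p (m x1 x2) (m x3 x4) = p (p (m x1 x2) (m x3 x4)) (m x1 x4))"

end

theory Submission
  imports Defs
begin

text \<open>A term is determined, modulo the identities of S_(4,400), by three sets of variables: those
  occurring in it, those occurring in a left factor of a product, and those occurring in a right
  factor. Evaluating at the valuations sending one variable to 3 or 4 and all others to 2 reads
  these sets off, so they are invariants of the identities of S_(4,400). Conversely, in an
  ai-semiring satisfying the five identities, the value of a term t is the join of the \<rho> x for x
  occurring in t and of the products \<rho> a \<rho> b for a in a left and b in a right factor: we prove that
  both have the same upper bounds, rewriting t by distributivity, associativity and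
  x(yz) = xy + yz + xz until all products have two variables. So the invariants determine the
  value, and the identities of the variety are exactly those preserving the invariants.\<close>

fun vars :: "trm \<Rightarrow> nat set" where
  "vars (Var x) = {x}"
| "vars (Add s t) = vars s \<union> vars t"
| "vars (Mul s t) = vars s \<union> vars t"

fun left_vars :: "trm \<Rightarrow> nat set" where
  "left_vars (Var x) = {}"
| "left_vars (Add s t) = left_vars s \<union> left_vars t"
| "left_vars (Mul s t) = vars s \<union> left_vars t"

fun right_vars :: "trm \<Rightarrow> nat set" where
  "right_vars (Var x) = {}"
| "right_vars (Add s t) = right_vars s \<union> right_vars t"
| "right_vars (Mul s t) = right_vars s \<union> vars t"

definition invariants :: "trm \<Rightarrow> nat set \<times> nat set \<times> nat set" where
  "invariants t = (vars t, left_vars t, right_vars t)"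

lemma vars_nonempty: "vars t \<noteq> {}"
  by (induction t) auto

lemma left_vars_subset_vars: "left_vars t \<subseteq> vars t"
  by (induction t) auto

lemma right_vars_subset_vars: "right_vars t \<subseteq> vars t"
  by (induction t) auto

lemma left_vars_empty_iff_right_vars_empty: "left_vars t = {} \<longleftrightarrow> right_vars t = {}"
  by (induction t) (auto simp: vars_nonempty)

text \<open>Left factors count double, so that reassociating (s1 s2) u to s1 (s2 u) decreases the weight.\<close>
fun weight :: "trm \<Rightarrow> nat" where
  "weight (Var x) = 1"
| "weight (Add s t) = weight s + weight t + 1"
| "weight (Mul s t) = 2 * weight s + weight t"

lemma weight_pos: "weight t > 0"
  by (induction t) auto

locale sigma_ai_semiring =
  fixes p m :: "'a \<Rightarrow> 'a \<Rightarrow> 'a"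
  assumes ai_semiring: "ai_semiring p m" and sigma: "sigma_S4 p m"
begin

lemma add_assoc: "p (p x y) z = p x (p y z)"
  and add_commute: "p x y = p y x"
  and add_idem: "p x x = x"
  and mult_assoc: "m (m x y) z = m x (m y z)"
  and distrib_left: "m x (p y z) = p (m x y) (m x z)"
  and distrib_right: "m (p x y) z = p (m x z) (m y z)"
  using ai_semiring unfolding ai_semiring_def by blast+

lemma mult_absorbs_right: "m x y = p (m x y) y"
  and mult_absorbs_left: "m x y = p (m x y) x"
  and mult_mult: "m (m x y) z = p (p (m x y) (m y z)) (m x z)"
  and add_mult_mult: "p (m x1 x2) (m x3 x4) = p (p (m x1 x2) (m x3 x4)) (m x1 x4)"
  using sigma unfolding sigma_S4_def by blast+

definition below :: "'a \<Rightarrow> 'a \<Rightarrow> bool" (infix "\<preceq>" 50) where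
  "a \<preceq> b \<longleftrightarrow> p a b = b"

lemma below_refl: "a \<preceq> a"
  unfolding below_def by (rule add_idem)

lemma below_trans: "a \<preceq> b \<Longrightarrow> b \<preceq> c \<Longrightarrow> a \<preceq> c"
  unfolding below_def by (metis add_assoc)

lemma below_antisym: "a \<preceq> b \<Longrightarrow> b \<preceq> a \<Longrightarrow> a = b"
  unfolding below_def by (metis add_commute)

lemma add_below_iff: "p a b \<preceq> c \<longleftrightarrow> a \<preceq> c \<and> b \<preceq> c"
  unfolding below_def by (metis add_assoc add_commute add_idem)

lemma left_below_mult: "a \<preceq> m a b"
  unfolding below_def by (metis mult_absorbs_left add_commute)

lemma right_below_mult: "b \<preceq> m a b"
  unfolding below_def by (metis mult_absorbs_right add_commute)

lemma mult_below_if_cross: "m a b' \<preceq> c \<Longrightarrow> m a' b \<preceq> c \<Longrightarrow> m a b \<preceq> c"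
  using add_below_iff below_trans unfolding below_def by (metis add_mult_mult add_assoc add_commute)

definition term_bound :: "(nat \<Rightarrow> 'a) \<Rightarrow> trm \<Rightarrow> 'a \<Rightarrow> bool" where
  "term_bound \<rho> t c \<longleftrightarrow>
     (\<forall>x\<in>vars t. \<rho> x \<preceq> c) \<and> (\<forall>a\<in>left_vars t. \<forall>b\<in>right_vars t. m (\<rho> a) (\<rho> b) \<preceq> c)"

lemma term_bound_Add: "term_bound \<rho> (Add s t) c \<longleftrightarrow> term_bound \<rho> s c \<and> term_bound \<rho> t c"
proof
  assume bounds: "term_bound \<rho> s c \<and> term_bound \<rho> t c"
  txt \<open>A cross product \<rho> a \<rho> b with a left in s' and b right in t' lies below
    \<rho> a \<rho> b' + \<rho> a' \<rho> b for any b' right in s' and a' left in t', by the fifth identity.\<close>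
  have cross: "m (\<rho> a) (\<rho> b) \<preceq> c"
    if "a \<in> left_vars s'" "b \<in> right_vars t'" "term_bound \<rho> s' c" "term_bound \<rho> t' c" for a b s' t'
  proof -
    obtain b' where "b' \<in> right_vars s'"
      using \<open>a \<in> left_vars s'\<close> left_vars_empty_iff_right_vars_empty by blast
    moreover obtain a' where "a' \<in> left_vars t'"
      using \<open>b \<in> right_vars t'\<close> left_vars_empty_iff_right_vars_empty by blast
    ultimately show ?thesis
      using mult_below_if_cross that unfolding term_bound_def by blast
  qed
  show "term_bound \<rho> (Add s t) c"
    using bounds cross[of _ s _ t] cross[of _ t _ s] unfolding term_bound_def by auto
qed (auto simp: term_bound_def)

definition exact_bounds :: "(nat \<Rightarrow> 'a) \<Rightarrow> trm \<Rightarrow> bool" where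
  "exact_bounds \<rho> t \<longleftrightarrow> (\<forall>c. eval p m \<rho> t \<preceq> c \<longleftrightarrow> term_bound \<rho> t c)"

lemma exact_bounds_cong:
  assumes "exact_bounds \<rho> t'" "eval p m \<rho> t = eval p m \<rho> t'" "invariants t = invariants t'"
  shows "exact_bounds \<rho> t"
  using assms unfolding exact_bounds_def term_bound_def invariants_def by simp

lemma exact_bounds_Var: "exact_bounds \<rho> (Var x)"
  unfolding exact_bounds_def term_bound_def by simp

lemma exact_bounds_Add: "exact_bounds \<rho> s \<Longrightarrow> exact_bounds \<rho> t \<Longrightarrow> exact_bounds \<rho> (Add s t)"
  unfolding exact_bounds_def by (simp add: add_below_iff term_bound_Add)

lemma exact_bounds_Mul_Var_Var: "exact_bounds \<rho> (Mul (Var x) (Var z))"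
  unfolding exact_bounds_def term_bound_def
  by (auto intro: below_trans[OF left_below_mult] below_trans[OF right_below_mult])

lemma exact_bounds_Mul_Add_left:
  "exact_bounds \<rho> (Mul s1 u) \<Longrightarrow> exact_bounds \<rho> (Mul s2 u) \<Longrightarrow> exact_bounds \<rho> (Mul (Add s1 s2) u)"
  by (rule exact_bounds_cong[of \<rho> "Add (Mul s1 u) (Mul s2 u)"])
    (auto simp: exact_bounds_Add invariants_def distrib_right)

lemma exact_bounds_Mul_Add_right:
  "exact_bounds \<rho> (Mul s u1) \<Longrightarrow> exact_bounds \<rho> (Mul s u2) \<Longrightarrow> exact_bounds \<rho> (Mul s (Add u1 u2))"
  by (rule exact_bounds_cong[of \<rho> "Add (Mul s u1) (Mul s u2)"])
    (auto simp: exact_bounds_Add invariants_def distrib_left)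

lemma exact_bounds_Mul_assoc:
  "exact_bounds \<rho> (Mul s1 (Mul s2 u)) \<Longrightarrow> exact_bounds \<rho> (Mul (Mul s1 s2) u)"
  by (rule exact_bounds_cong) (auto simp: invariants_def mult_assoc)

lemma exact_bounds_Mul_Mul_right:
  assumes "exact_bounds \<rho> (Mul s u1)" "exact_bounds \<rho> (Mul u1 u2)" "exact_bounds \<rho> (Mul s u2)"
  shows "exact_bounds \<rho> (Mul s (Mul u1 u2))"
proof (rule exact_bounds_cong)
  show "exact_bounds \<rho> (Add (Add (Mul s u1) (Mul u1 u2)) (Mul s u2))"
    using assms by (intro exact_bounds_Add)
  show "eval p m \<rho> (Mul s (Mul u1 u2)) = eval p m \<rho> (Add (Add (Mul s u1) (Mul u1 u2)) (Mul s u2))"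
    by (simp flip: mult_assoc mult_mult)
  show "invariants (Mul s (Mul u1 u2)) = invariants (Add (Add (Mul s u1) (Mul u1 u2)) (Mul s u2))"
    using left_vars_subset_vars[of u1] right_vars_subset_vars[of u1] by (auto simp: invariants_def)
qed

lemma exact_bounds: "exact_bounds \<rho> t"
proof (induction t rule: measure_induct_rule[of weight])
  case (less t)
  consider (Var) x where "t = Var x" | (Add) s u where "t = Add s u"
    | (Mul_Add_right) s u1 u2 where "t = Mul s (Add u1 u2)"
    | (Mul_Mul_right) s u1 u2 where "t = Mul s (Mul u1 u2)"
    | (Mul_Add_left) s1 s2 u where "t = Mul (Add s1 s2) u"
    | (Mul_Mul_left) s1 s2 u where "t = Mul (Mul s1 s2) u"
    | (Mul_Var_Var) x z where "t = Mul (Var x) (Var z)"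
    by (metis trm.exhaust)
  then show ?case
  proof cases
    case (Add s u)
    then show ?thesis using less weight_pos[of s] weight_pos[of u] by (simp add: exact_bounds_Add)
  next
    case (Mul_Add_right s u1 u2)
    then show ?thesis
      using less weight_pos[of u1] weight_pos[of u2] by (simp add: exact_bounds_Mul_Add_right)
  next
    case (Mul_Mul_right s u1 u2)
    then show ?thesis
      using less weight_pos[of s] weight_pos[of u1] weight_pos[of u2]
      by (simp add: exact_bounds_Mul_Mul_right)
  next
    case (Mul_Add_left s1 s2 u)
    then show ?thesis
      using less weight_pos[of s1] weight_pos[of s2] by (simp add: exact_bounds_Mul_Add_left)
  next
    case (Mul_Mul_left s1 s2 u)
    then show ?thesis using less weight_pos[of s1] by (simp add: exact_bounds_Mul_assoc)
  qed (simp_all add: exact_bounds_Var exact_bounds_Mul_Var_Var)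
qed

lemma eval_eq_if_invariants_eq:
  assumes "invariants s = invariants t"
  shows "eval p m \<rho> s = eval p m \<rho> t"
proof -
  have "term_bound \<rho> s = term_bound \<rho> t"
    using assms unfolding term_bound_def invariants_def by simp
  then show ?thesis
    using exact_bounds[of \<rho> s] exact_bounds[of \<rho> t] below_refl below_antisym
    unfolding exact_bounds_def by metis
qed

end

lemma s4_add_simps [simp]:
  "s4_add E1 x = E1" "s4_add x E1 = E1" "s4_add E2 x = x" "s4_add x E2 = x"
  "s4_add E3 E4 = E1" "s4_add E4 E3 = E1" "s4_add x x = x"
  by (cases x; simp)+

declare s4_add.simps [simp del]

lemma s4_forall: "(\<forall>x. P x) \<longleftrightarrow> P E1 \<and> P E2 \<and> P E3 \<and> P E4"
  by (metis s4.exhaust)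

interpretation s4: sigma_ai_semiring s4_add s4_mul
  by unfold_locales (simp_all add: ai_semiring_def sigma_S4_def s4_forall)

text \<open>Under these valuations 2 acts as an identity, except that 3 survives only as a right factor
  and 4 only as a left factor; 1 is absorbing.\<close>
lemma eval_s4_E3_at:
  "eval s4_add s4_mul ((\<lambda>_. E2)(x := E3)) t =
     (if x \<notin> vars t then E2 else if x \<in> left_vars t then E1 else E3)"
proof (induction t)
  case (Add s t)
  then show ?case using left_vars_subset_vars[of s] left_vars_subset_vars[of t] by auto
next
  case (Mul s t)
  show ?case
  proof (cases "x \<in> vars s")
    case True
    then show ?thesis using Mul
      by (cases "eval s4_add s4_mul ((\<lambda>_. E2)(x := E3)) t") auto
  qed (use Mul in auto)
qed simp

lemma eval_s4_E4_at:
  "eval s4_add s4_mul ((\<lambda>_. E2)(x := E4)) t =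
     (if x \<notin> vars t then E2 else if x \<in> right_vars t then E1 else E4)"
proof (induction t)
  case (Add s t)
  then show ?case using right_vars_subset_vars[of s] right_vars_subset_vars[of t] by auto
next
  case (Mul s t)
  show ?case
  proof (cases "x \<in> vars t")
    case True
    then show ?thesis using Mul
      by (cases "eval s4_add s4_mul ((\<lambda>_. E2)(x := E4)) s") auto
  qed (use Mul in auto)
qed simp

lemma s4_satisfies_iff: "satisfies s4_add s4_mul s t \<longleftrightarrow> invariants s = invariants t"
proof
  assume "satisfies s4_add s4_mul s t"
  then have E3: "eval s4_add s4_mul ((\<lambda>_. E2)(x := E3)) s =
      eval s4_add s4_mul ((\<lambda>_. E2)(x := E3)) t"
    and E4: "eval s4_add s4_mul ((\<lambda>_. E2)(x := E4)) s =
      eval s4_add s4_mul ((\<lambda>_. E2)(x := E4)) t" for x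
    unfolding satisfies_def by blast+
  have "x \<in> vars s \<longleftrightarrow> x \<in> vars t" "x \<in> left_vars s \<longleftrightarrow> x \<in> left_vars t" for x
    using E3[of x] left_vars_subset_vars[of s] left_vars_subset_vars[of t]
    unfolding eval_s4_E3_at by (auto split: if_splits)
  moreover have "x \<in> right_vars s \<longleftrightarrow> x \<in> right_vars t" for x
    using E4[of x] right_vars_subset_vars[of s] right_vars_subset_vars[of t]
    unfolding eval_s4_E4_at by (auto split: if_splits)
  ultimately show "invariants s = invariants t"
    unfolding invariants_def by blast
qed (unfold satisfies_def, blast intro: s4.eval_eq_if_invariants_eq)

lemma in_V_S4_iff: "in_V_S4 p m \<longleftrightarrow> (\<forall>s t. invariants s = invariants t \<longrightarrow> satisfies p m s t)"
  unfolding in_V_S4_def s4_satisfies_iff ..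

lemma ai_semiring_if_invariant_identities:
  assumes "\<forall>s t. invariants s = invariants t \<longrightarrow> satisfies p m s t"
  shows "ai_semiring p m"
proof -
  let ?x = "Var 0" and ?y = "Var 1" and ?z = "Var 2"
  have law: "eval p m ((!) [x, y, z]) s = eval p m ((!) [x, y, z]) t"
    if "invariants s = invariants t" for s t x y z
    using assms that unfolding satisfies_def by blast
  have "p (p x y) z = p x (p y z)" for x y z
    by (rule law[of "Add (Add ?x ?y) ?z" "Add ?x (Add ?y ?z)" x y z, simplified])
      (auto simp: invariants_def)
  moreover have "p x y = p y x" for x y
    by (rule law[of "Add ?x ?y" "Add ?y ?x" x y x, simplified]) (auto simp: invariants_def)
  moreover have "p x x = x" for x
    by (rule law[of "Add ?x ?x" ?x x x x, simplified]) (auto simp: invariants_def)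
  moreover have "m (m x y) z = m x (m y z)" for x y z
    by (rule law[of "Mul (Mul ?x ?y) ?z" "Mul ?x (Mul ?y ?z)" x y z, simplified])
      (auto simp: invariants_def)
  moreover have "m x (p y z) = p (m x y) (m x z)" for x y z
    by (rule law[of "Mul ?x (Add ?y ?z)" "Add (Mul ?x ?y) (Mul ?x ?z)" x y z, simplified])
      (auto simp: invariants_def)
  moreover have "m (p x y) z = p (m x z) (m y z)" for x y z
    by (rule law[of "Mul (Add ?x ?y) ?z" "Add (Mul ?x ?z) (Mul ?y ?z)" x y z, simplified])
      (auto simp: invariants_def)
  ultimately show ?thesis
    unfolding ai_semiring_def by blast
qed

lemma sigma_S4_if_invariant_identities:
  assumes "\<forall>s t. invariants s = invariants t \<longrightarrow> satisfies p m s t"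
  shows "sigma_S4 p m"
proof -
  let ?x = "Var 0" and ?y = "Var 1" and ?z = "Var 2" and ?w = "Var 3"
  have law: "eval p m ((!) [x, y, z, w]) s = eval p m ((!) [x, y, z, w]) t"
    if "invariants s = invariants t" for s t x y z w
    using assms that unfolding satisfies_def by blast
  have "m (m x y) z = p (m (m x y) z) y" for x y z
    by (rule law[of "Mul (Mul ?x ?y) ?z" "Add (Mul (Mul ?x ?y) ?z) ?y" x y z x, simplified])
      (auto simp: invariants_def)
  moreover have "m x y = p (m x y) y" for x y
    by (rule law[of "Mul ?x ?y" "Add (Mul ?x ?y) ?y" x y x x, simplified])
      (auto simp: invariants_def)
  moreover have "m x y = p (m x y) x" for x y
    by (rule law[of "Mul ?x ?y" "Add (Mul ?x ?y) ?x" x y x x, simplified])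
      (auto simp: invariants_def)
  moreover have "m (m x y) z = p (p (m x y) (m y z)) (m x z)" for x y z
    by (rule law[of "Mul (Mul ?x ?y) ?z" "Add (Add (Mul ?x ?y) (Mul ?y ?z)) (Mul ?x ?z)"
          x y z x, simplified])
      (auto simp: invariants_def)
  moreover have "p (m x y) (m z w) = p (p (m x y) (m z w)) (m x w)" for x y z w
    by (rule law[of "Add (Mul ?x ?y) (Mul ?z ?w)" "Add (Add (Mul ?x ?y) (Mul ?z ?w)) (Mul ?x ?w)"
          x y z w, simplified])
      (auto simp: invariants_def)
  ultimately show ?thesis
    unfolding sigma_S4_def by blast
qed

theorem proposition3p6:
  fixes p m :: "'a \<Rightarrow> 'a \<Rightarrow> 'a"
  shows "in_V_S4 p m \<longleftrightarrow> (ai_semiring p m \<and> sigma_S4 p m)"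
proof
  assume "in_V_S4 p m"
  then show "ai_semiring p m \<and> sigma_S4 p m"
    unfolding in_V_S4_iff
    by (blast intro: ai_semiring_if_invariant_identities sigma_S4_if_invariant_identities)
next
  assume "ai_semiring p m \<and> sigma_S4 p m"
  then interpret sigma_ai_semiring p m
    by unfold_locales blast+
  show "in_V_S4 p m"
    unfolding in_V_S4_iff satisfies_def by (blast intro: eval_eq_if_invariants_eq)
qed

end
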